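(* Let $f(y_1,\dots,y_k,z_1,\dots,z_l)\in\mathbb{R}\langle Y;Z\rangle$ be a multilinear $*$-polynomial, and let $M_n(\mathbb{R})$ be endowed with the transpose involution. Let \[ g(y_1,\dots,y_{k+2l})=f(y_1,\dots,y_k,[y_{k+1},y_{k+2}],\dots,[y_{k+2l-1},y_{k+2l}]). \] Then the image of $f$ on $M_n(\mathbb{R})$, i.e. $\{f(a_1,\dots,a_k,b_1,\dots,b_l): a_i \text{ symmetric}, b_j \text{ skew-symmetric}\}$, equals the image of $g$ evaluated on symmetric matrices, i.e. $\{g(c_1,\dots,c_{k+2l}): c_i\in M_n(\mathbb{R}) \text{ symmetric}\}$.
   Context: $\mathbb{R}\langle Y;Z\rangle$ is the free associative algebra over $\mathbb{R}$ on symmetric variables $Y=\{y_1,y_2,\dots\}$ and skew-symmetric variables $Z=\{z_1,z_2,\dots\}$; $[u,v]=uv-vu$. A multilinear polynomial is one in which each variable occurs exactly once in every monomial. *)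

theory Defs
  imports "HOL-Analysis.Analysis"
begin

text \<open>A multilinear polynomial in m noncommuting variables x_0,...,x_(m-1) is a real
linear combination of the monomials x_(p!0) x_(p!1) ... x_(p!(m-1)), where p ranges over
the orderings (permutations) of [0..<m].  It is given by its coefficient function
on such orderings (values on other lists are irrelevant).\<close>

definition orderings :: "nat \<Rightarrow> nat list set" where
  "orderings m = {p. distinct p \<and> set p = {0..<m}}"

definition mat_list_prod :: "(real^'n^'n) list \<Rightarrow> real^'n^'n" where
  "mat_list_prod As = foldr (\<lambda>A B. A ** B) As (mat 1)"

definition ml_eval :: "nat \<Rightarrow> (nat list \<Rightarrow> real) \<Rightarrow> (nat \<Rightarrow> real^'n^'n) \<Rightarrow> real^'n^'n" where
  "ml_eval m c a = (\<Sum>p\<in>orderings m. c p *\<^sub>R mat_list_prod (map a p))"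

definition sym_mat :: "real^'n^'n \<Rightarrow> bool" where
  "sym_mat A \<longleftrightarrow> transpose A = A"

definition skew_mat :: "real^'n^'n \<Rightarrow> bool" where
  "skew_mat A \<longleftrightarrow> transpose A = - A"

definition commut :: "real^'n^'n \<Rightarrow> real^'n^'n \<Rightarrow> real^'n^'n" where
  "commut A B = A ** B - B ** A"

text \<open>Image of the multilinear *-polynomial f(y_1..y_k,z_1..z_l) (variables 0..<k are the
symmetric y's, variables k..<k+l are the skew z's) on M_n(R) with transpose involution.\<close>
definition star_image :: "nat \<Rightarrow> nat \<Rightarrow> (nat list \<Rightarrow> real) \<Rightarrow> (real^'n^'n) set" where
  "star_image k l c = {ml_eval (k + l) c a | a.
      (\<forall>i<k. sym_mat (a i)) \<and> (\<forall>j<l. skew_mat (a (k + j)))}"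

definition g_eval :: "nat \<Rightarrow> nat \<Rightarrow> (nat list \<Rightarrow> real) \<Rightarrow> (nat \<Rightarrow> real^'n^'n) \<Rightarrow> real^'n^'n" where
  "g_eval k l c y = ml_eval (k + l) c
     (\<lambda>i. if i < k then y i else commut (y (k + 2 * (i - k))) (y (k + 2 * (i - k) + 1)))"

definition g_sym_image :: "nat \<Rightarrow> nat \<Rightarrow> (nat list \<Rightarrow> real) \<Rightarrow> (real^'n^'n) set" where
  "g_sym_image k l c = {g_eval k l c y | y. \<forall>i<k + 2 * l. sym_mat (y i)}"

end

theory Submission
  imports Defs
begin

text \<open>Commutators of symmetric matrices are skew-symmetric, and conversely every real
skew-symmetric matrix S is such a commutator: for a diagonal D with pairwise distinct
entries d i one has [D, B] i j = (d i - d j) B i j, so B i j = S i j / (d i - d j)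
(and B i i = 0) is symmetric with [D, B] = S. Hence, as the y's range over symmetric
matrices, the substituted commutators range exactly over the skew-symmetric matrices.\<close>

lemma ml_eval_cong:
  assumes "\<And>i. i < m \<Longrightarrow> a i = b i"
  shows "ml_eval m c a = ml_eval m c b"
  unfolding ml_eval_def
proof (rule sum.cong[OF refl])
  fix p assume "p \<in> orderings m"
  then have "map a p = map b p"
    using assms by (auto simp: orderings_def)
  then show "c p *\<^sub>R mat_list_prod (map a p) = c p *\<^sub>R mat_list_prod (map b p)"
    by (simp only:)
qed

lemma transpose_diff: "transpose (A - B) = transpose A - transpose (B :: 'a::ab_group_add^'n^'m)"
  by (simp add: transpose_def vec_eq_iff)

lemma skew_mat_commut:
  assumes "sym_mat A" "sym_mat B"
  shows "skew_mat (commut A B)"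
  using assms unfolding sym_mat_def skew_mat_def commut_def
  by (simp add: transpose_diff matrix_transpose_mul)

lemma skew_mat_nth:
  assumes "skew_mat S"
  shows "S $ j $ i = - S $ i $ j"
proof -
  have "transpose S $ i $ j = (- S) $ i $ j"
    using assms unfolding skew_mat_def by simp
  then show ?thesis
    by (simp add: transpose_def)
qed

definition diag_mat :: "('n \<Rightarrow> real) \<Rightarrow> real^'n^'n" where
  "diag_mat d = (\<chi> i j. if i = j then d i else 0)"

lemma sym_mat_diag_mat: "sym_mat (diag_mat d)"
  unfolding sym_mat_def diag_mat_def transpose_def by (auto simp: vec_eq_iff)

lemma commut_diag_mat_nth: "commut (diag_mat d) B $ i $ j = (d i - d j) * B $ i $ j"
proof -
  have "(diag_mat d ** B) $ i $ j = d i * B $ i $ j"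
    unfolding matrix_matrix_mult_def diag_mat_def
    by (simp add: if_distrib[where f="\<lambda>x. x * _"] sum.delta cong: if_cong)
  moreover have "(B ** diag_mat d) $ i $ j = B $ i $ j * d j"
    unfolding matrix_matrix_mult_def diag_mat_def
    by (simp add: if_distrib[where f="\<lambda>x. _ * x"] sum.delta' cong: if_cong)
  ultimately show ?thesis
    unfolding commut_def by (simp add: algebra_simps)
qed

lemma skew_mat_imp_commut_sym:
  fixes S :: "real^'n^'n"
  assumes "skew_mat S"
  obtains A B where "sym_mat A" "sym_mat B" "S = commut A B"
proof -
  obtain f :: "'n \<Rightarrow> nat" where "inj f"
    using finite_imp_inj_to_nat_seg[of "UNIV :: 'n set"] by auto
  define d where "d i = real (f i)" for i
  have d_distinct: "d i - d j \<noteq> 0" if "i \<noteq> j" for i j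
    using \<open>inj f\<close> that unfolding d_def inj_def by auto
  define B :: "real^'n^'n" where
    "B = (\<chi> i j. if i = j then 0 else S $ i $ j / (d i - d j))"
  have "sym_mat B"
    unfolding sym_mat_def B_def transpose_def
  proof (clarsimp simp: vec_eq_iff)
    fix i j :: 'n assume "i \<noteq> j"
    then show "S $ j $ i / (d j - d i) = S $ i $ j / (d i - d j)"
      using d_distinct skew_mat_nth[OF assms, of i j] by (simp add: field_simps)
  qed
  moreover have "S = commut (diag_mat d) B"
  proof -
    have "S $ i $ j = (d i - d j) * B $ i $ j" for i j
      using d_distinct[of i j] skew_mat_nth[OF assms, of i i] by (auto simp: B_def)
    then show ?thesis
      by (simp add: vec_eq_iff commut_diag_mat_nth)
  qed
  ultimately show ?thesis
    using that sym_mat_diag_mat by blast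
qed

definition comm_subst :: "nat \<Rightarrow> (nat \<Rightarrow> real^'n^'n) \<Rightarrow> nat \<Rightarrow> real^'n^'n" where
  "comm_subst k y i =
     (if i < k then y i else commut (y (k + 2 * (i - k))) (y (k + 2 * (i - k) + 1)))"

lemma g_eval_eq_ml_eval_comm_subst: "g_eval k l c y = ml_eval (k + l) c (comm_subst k y)"
  unfolding g_eval_def comm_subst_def ..

lemma comm_subst_sym_skew:
  assumes "\<forall>i<k + 2 * l. sym_mat (y i)"
  shows "\<forall>i<k. sym_mat (comm_subst k y i)" "\<forall>j<l. skew_mat (comm_subst k y (k + j))"
  using assms by (auto simp: comm_subst_def intro!: skew_mat_commut)

lemma sym_skew_imp_comm_subst:
  assumes sym: "\<forall>i<k. sym_mat (a i)" and skew: "\<forall>j<l. skew_mat (a (k + j))"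
  obtains y where "\<forall>i<k + 2 * l. sym_mat (y i)" "\<And>i. i < k + l \<Longrightarrow> comm_subst k y i = a i"
proof -
  have "\<forall>j. \<exists>P Q. j < l \<longrightarrow> sym_mat P \<and> sym_mat Q \<and> a (k + j) = commut P Q"
    using skew skew_mat_imp_commut_sym by meson
  then obtain P Q where PQ: "\<And>j. j < l \<Longrightarrow> sym_mat (P j) \<and> sym_mat (Q j) \<and> a (k + j) = commut (P j) (Q j)"
    by metis
  define y where
    "y i = (if i < k then a i else if even (i - k) then P ((i - k) div 2) else Q ((i - k) div 2))" for i
  have y_sym: "sym_mat (y i)" if "i < k + 2 * l" for i
    using that sym PQ[of "(i - k) div 2"] by (auto simp: y_def)
  have subst_skew: "comm_subst k y (k + j) = a (k + j)" if "j < l" for j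
    using PQ[OF that] by (simp add: comm_subst_def y_def)
  have "comm_subst k y i = a i" if "i < k + l" for i
    using that subst_skew by (cases "i < k") (auto simp: comm_subst_def y_def dest: le_Suc_ex)
  with y_sym show ?thesis
    using that by blast
qed

theorem mainTheorem5:
  fixes k l :: nat and c :: "nat list \<Rightarrow> real"
  shows "(star_image k l c :: (real^'n^'n) set) = g_sym_image k l c"
proof
  show "star_image k l c \<subseteq> (g_sym_image k l c :: (real^'n^'n) set)"
  proof
    fix x :: "real^'n^'n" assume "x \<in> star_image k l c"
    then obtain a where x: "x = ml_eval (k + l) c a"
      and a_sym: "\<forall>i<k. sym_mat (a i)" and a_skew: "\<forall>j<l. skew_mat (a (k + j))"
      unfolding star_image_def by blast
    obtain y where y_sym: "\<forall>i<k + 2 * l. sym_mat (y i)"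
      and y_subst: "\<And>i. i < k + l \<Longrightarrow> comm_subst k y i = a i"
      using sym_skew_imp_comm_subst[OF a_sym a_skew] by blast
    have "g_eval k l c y = x"
      unfolding g_eval_eq_ml_eval_comm_subst x by (rule ml_eval_cong) (rule y_subst)
    then show "x \<in> g_sym_image k l c"
      unfolding g_sym_image_def using y_sym by blast
  qed
next
  show "g_sym_image k l c \<subseteq> (star_image k l c :: (real^'n^'n) set)"
    unfolding g_sym_image_def star_image_def g_eval_eq_ml_eval_comm_subst
    using comm_subst_sym_skew by blast
qed

end
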